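(* Let $T^4=\mathbb{R}^4/\mathbb{Z}^4$, let $G$ be a constant Riemannian metric and $B$ a constant real 2-form on $T^4$ with all components $G_{IJ},B_{IJ}\in\mathbb{Q}$ (i.e. the $\mathcal N=(1,1)$ SCFT for $(T^4;G,B)$ is rational). Let $I$ be a polarizable constant complex structure on $T^4$ with which $G$ is compatible, $M_I=(T^4,I)$, and $\omega$ the associated Kähler form. Then $\omega\in \mathcal H^2(M_I)\otimes_{\mathbb{Q}}\mathbb{R}$, where $\mathcal H^2(M_I)=H^2(T^4;\mathbb{Q})\cap H^{1,1}(M_I;\mathbb{R})$. Moreover, $i\omega\in \mathcal H^2(M_I)\otimes_{\mathbb{Q}} E$, where $E\subset\mathbb{C}$ is the reflex field described below.
   Context: Coordinates $X^1,\dots,X^4$ on $T^4$, normalized so that $H_1(T^4;\mathbb{Z})=\mathbb{Z}^4$ and $2\pi\sqrt{\alpha'}=1$; $G=G_{IJ}dX^I\otimes dX^J$, $B=\frac12B_{IJ}dX^I\wedge dX^J$. $G$ compatible with $I$ means $G(Iu,Iv)=G(u,v)$. Polarizable means some $\psi\in H^2(T^4;\mathbb{Z})\cap H^{1,1}(M_I)$ has $\psi(I\cdot,\cdot)$ positive definite. The Kähler form is $\omega=\frac12\omega_{IJ}dX^I\wedge dX^J$ with $\omega_{IJ}=I^K{}_I G_{KJ}$. Under these hypotheses $M_I$ is a CM abelian surface: $\mathrm{End}(H^1(M_I;\mathbb{Q}))^{\mathrm{Hdg}}$ (Hodge-structure-preserving $\mathbb{Q}$-endomorphisms) contains a commutative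 semisimple $\mathbb{Q}$-subalgebra $F$ of dimension 4 (a CM algebra). $F$ acts on the 2-dimensional space $H^{1,0}(M_I)$ diagonalizably through two ring homomorphisms $\varphi_1,\varphi_2:F\to\mathbb{C}$ (the CM type). The reflex field is $E:=\mathbb{Q}\big(\varphi_1(a)+\varphi_2(a)\,:\,a\in F\big)\subset\mathbb{C}$; equivalently, it is the image in $\mathbb{C}$ of the (CM) field $\mathrm{End}(T_{M_I}\otimes\mathbb{Q})^{\mathrm{Hdg}}$ through its action on $H^{2,0}(M_I)$, where $T_{M_I}\otimes\mathbb{Q}$ is the orthogonal complement of $\mathcal H^2(M_I)$ in $H^2(T^4;\mathbb{Q})$ with respect to $(\psi,\chi)\mapsto\int\psi\wedge\chi$. *)

theory Defs
  imports "HOL-Analysis.Analysis"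
begin

text \<open>Constant tensors on T^4 = R^4/Z^4 in the coordinates X^1..X^4 are 4x4 real matrices
indexed by the type 4. A tangent vector u has components u$J.
A constant complex structure I acts on tangent vectors by (Iu)^K = I^K_J u^J, i.e.
I$K$J = I^K_J and Iu = I *v u.\<close>

type_synonym mat4 = "real^4^4"

definition bil :: "mat4 \<Rightarrow> real^4 \<Rightarrow> real^4 \<Rightarrow> real" where
  "bil M u v = u \<bullet> (M *v v)"

definition rat_mat :: "mat4 \<Rightarrow> bool" where
  "rat_mat M \<longleftrightarrow> (\<forall>i j. M$i$j \<in> \<rat>)"

definition int_mat :: "mat4 \<Rightarrow> bool" where
  "int_mat M \<longleftrightarrow> (\<forall>i j. M$i$j \<in> \<int>)"

definition antisym_mat :: "mat4 \<Rightarrow> bool" where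
  "antisym_mat M \<longleftrightarrow> transpose M = - M"

definition is_metric :: "mat4 \<Rightarrow> bool" where
  "is_metric G \<longleftrightarrow> transpose G = G \<and> (\<forall>u. u \<noteq> 0 \<longrightarrow> bil G u u > 0)"

definition is_complex_structure :: "mat4 \<Rightarrow> bool" where
  "is_complex_structure I \<longleftrightarrow> I ** I = - mat 1"

definition compatible :: "mat4 \<Rightarrow> mat4 \<Rightarrow> bool" where
  "compatible G I \<longleftrightarrow> (\<forall>u v. bil G (I *v u) (I *v v) = bil G u v)"

text \<open>A real constant 2-form (antisymmetric matrix) is of type (1,1) w.r.t. I iff it is I-invariant.\<close>
definition H11R :: "mat4 \<Rightarrow> mat4 set" where
  "H11R I = {A. antisym_mat A \<and> (\<forall>u v. bil A (I *v u) (I *v v) = bil A u v)}"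

text \<open>H^2(T^4;Q): 2-forms (1/2) A_IJ dX^I wedge dX^J with rational coefficients;
H^2(T^4;Z): integral coefficients.\<close>
definition H2Q :: "mat4 set" where
  "H2Q = {A. antisym_mat A \<and> rat_mat A}"

definition H2Z :: "mat4 set" where
  "H2Z = {A. antisym_mat A \<and> int_mat A}"

definition calH2 :: "mat4 \<Rightarrow> mat4 set" where
  "calH2 I = H2Q \<inter> H11R I"

definition polarizable :: "mat4 \<Rightarrow> bool" where
  "polarizable I \<longleftrightarrow> (\<exists>\<psi>. \<psi> \<in> H2Z \<and> \<psi> \<in> H11R I \<and>
      (\<forall>u v. bil \<psi> (I *v u) v = bil \<psi> (I *v v) u) \<and>
      (\<forall>u. u \<noteq> 0 \<longrightarrow> bil \<psi> (I *v u) u > 0))"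

definition kaehler_form :: "mat4 \<Rightarrow> mat4 \<Rightarrow> mat4" where
  "kaehler_form G I = (\<chi> i j. \<Sum>k\<in>UNIV. I$k$i * G$k$j)"

definition cmat :: "mat4 \<Rightarrow> complex^4^4" where
  "cmat M = (\<chi> i j. complex_of_real (M$i$j))"

text \<open>Complex constant 1-forms alpha = alpha_J dX^J are vectors in complex^4; alpha(u) = sum alpha_J u^J.
alpha(Iu) = (alpha v* I)(u). H^{1,0}: alpha(I u) = i alpha(u); H^{0,1}: alpha(I u) = -i alpha(u).\<close>
definition H10 :: "mat4 \<Rightarrow> (complex^4) set" where
  "H10 I = {\<alpha>. \<alpha> v* cmat I = \<i> *s \<alpha>}"

definition H01 :: "mat4 \<Rightarrow> (complex^4) set" where
  "H01 I = {\<alpha>. \<alpha> v* cmat I = (- \<i>) *s \<alpha>}"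

text \<open>Q-endomorphisms of H^1(T^4;Q) = Q^4 (rational 1-forms), written as rational matrices f
acting by alpha |-> alpha v* f. Hodge-structure preserving: preserves H^{1,0} and H^{0,1}.\<close>
definition hodge_endo :: "mat4 \<Rightarrow> mat4 \<Rightarrow> bool" where
  "hodge_endo I f \<longleftrightarrow> rat_mat f \<and>
     (\<forall>\<alpha>\<in>H10 I. \<alpha> v* cmat f \<in> H10 I) \<and> (\<forall>\<alpha>\<in>H01 I. \<alpha> v* cmat f \<in> H01 I)"

text \<open>F is a commutative semisimple Q-subalgebra of dimension 4 of End(H^1(M_I;Q))^Hdg.
Semisimple for a commutative finite-dimensional algebra: no nonzero nilpotents.\<close>
definition CM_algebra :: "mat4 \<Rightarrow> mat4 set \<Rightarrow> bool" where
  "CM_algebra I F \<longleftrightarrow>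
     (\<forall>a\<in>F. hodge_endo I a) \<and>
     mat 1 \<in> F \<and>
     (\<forall>a\<in>F. \<forall>b\<in>F. a + b \<in> F \<and> a ** b \<in> F) \<and>
     (\<forall>a\<in>F. \<forall>q::rat. of_rat q *\<^sub>R a \<in> F) \<and>
     (\<forall>a\<in>F. \<forall>b\<in>F. a ** b = b ** a) \<and>
     (\<forall>a\<in>F. \<forall>n::nat. ((\<lambda>x. a ** x) ^^ n) (mat 1) = 0 \<longrightarrow> a = 0) \<and>
     (\<exists>e::4 \<Rightarrow> mat4. (\<forall>i. e i \<in> F) \<and>
        (\<forall>c::4 \<Rightarrow> rat. (\<Sum>i\<in>UNIV. of_rat (c i) *\<^sub>R e i) = 0 \<longrightarrow> (\<forall>i. c i = 0)) \<and>
        (\<forall>a\<in>F. \<exists>c::4 \<Rightarrow> rat. a = (\<Sum>i\<in>UNIV. of_rat (c i) *\<^sub>R e i)))"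

definition CM_type :: "mat4 \<Rightarrow> mat4 set \<Rightarrow> (mat4 \<Rightarrow> complex) \<Rightarrow> (mat4 \<Rightarrow> complex) \<Rightarrow> bool" where
  "CM_type I F \<phi>1 \<phi>2 \<longleftrightarrow> (\<exists>\<alpha>1 \<alpha>2. \<alpha>1 \<in> H10 I \<and> \<alpha>2 \<in> H10 I \<and>
      (\<forall>z w. z *s \<alpha>1 + w *s \<alpha>2 = 0 \<longrightarrow> z = 0 \<and> w = 0) \<and>
      (\<forall>\<alpha>\<in>H10 I. \<exists>z w. \<alpha> = z *s \<alpha>1 + w *s \<alpha>2) \<and>
      (\<forall>a\<in>F. \<alpha>1 v* cmat a = \<phi>1 a *s \<alpha>1 \<and> \<alpha>2 v* cmat a = \<phi>2 a *s \<alpha>2))"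

definition gen_subfield :: "complex set \<Rightarrow> complex set" where
  "gen_subfield S = \<Inter>{K. S \<subseteq> K \<and> 0 \<in> K \<and> 1 \<in> K \<and>
      (\<forall>x\<in>K. \<forall>y\<in>K. x + y \<in> K \<and> x * y \<in> K) \<and> (\<forall>x\<in>K. - x \<in> K) \<and>
      (\<forall>x\<in>K. x \<noteq> 0 \<longrightarrow> inverse x \<in> K)}"

definition reflex_field :: "mat4 set \<Rightarrow> (mat4 \<Rightarrow> complex) \<Rightarrow> (mat4 \<Rightarrow> complex) \<Rightarrow> complex set" where
  "reflex_field F \<phi>1 \<phi>2 = gen_subfield {\<phi>1 a + \<phi>2 a | a. a \<in> F}"

definition in_tensor :: "mat4 set \<Rightarrow> complex set \<Rightarrow> complex^4^4 \<Rightarrow> bool" where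
  "in_tensor H E M \<longleftrightarrow> (\<exists>n (c::nat \<Rightarrow> complex) (A::nat \<Rightarrow> mat4).
      (\<forall>k<n. c k \<in> E \<and> A k \<in> H) \<and> M = (\<chi> i j. \<Sum>k<n. c k * complex_of_real (A k $ i $ j)))"

end

theory Submission
  imports Defs
begin

(*
  Everything is linear algebra on the constant forms of T^4.

  Let P be a polarization and Q its (rational) inverse. The operator M = - Q omega is
  self-adjoint for the Hermitian metric g = I^T P and commutes with I; viewed as a Hermitian
  operator on C^2 it satisfies a real quadratic equation M^2 = s M - p with s > 0. As
  omega = - P M, this gives omega Q omega = - s omega - p P, while omega Q omega = - G Q G is a
  rational (1,1)-form. Hence omega = (G Q G - p P) / s.

  For the reflex field, F acts diagonally on the complex covectors in the basis
  alpha1, alpha2, conj alpha1, conj alpha2 through the characters phi1, phi2, conj phi1,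
  conj phi2, and I acts there by i, i, -i, -i. The characters of a rational basis e_j of F form
  an invertible matrix, so I = i (sum_j c_j e_j) for complex c_j. The normal equations for c
  have the rational trace form tr (e_j e_l) as matrix and 2 (phi1 + phi2)(e_j) - tr e_j as
  right-hand side, so Cramer's rule puts c_j in E. Finally i omega = - sum_j c_j e_j^T G, and
  antisymmetrizing turns each e_j^T G into the rational (1,1)-form (e_j^T G - G e_j) / 2.
*)

lemma matrix_mul_uminus_left: "(- A) ** B = - (A ** (B :: 'a::ring_1^'p^'n))"
  by (simp add: vec_eq_iff matrix_matrix_mult_def sum_negf)

lemma matrix_mul_uminus_right: "A ** (- B) = - (A ** (B :: 'a::ring_1^'p^'n))"
  by (simp add: vec_eq_iff matrix_matrix_mult_def sum_negf)

lemma matrix_mul_diff_left: "(A - B) ** C = A ** C - B ** (C :: 'a::ring_1^'p^'n)"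
  by (simp add: vec_eq_iff matrix_matrix_mult_def sum_subtractf left_diff_distrib)

lemma matrix_mul_diff_right: "C ** (A - B) = C ** A - C ** (B :: 'a::ring_1^'p^'n)"
  by (simp add: vec_eq_iff matrix_matrix_mult_def sum_subtractf right_diff_distrib)

lemma transpose_uminus: "transpose (- A) = - transpose (A :: 'a::group_add^'n^'m)"
  by (simp add: vec_eq_iff transpose_def)

lemma transpose_diff: "transpose (A - B) = transpose A - transpose (B :: 'a::group_add^'n^'m)"
  by (simp add: vec_eq_iff transpose_def)

lemma matrix_vector_mult_uminus: "(- A) *v x = - (A *v (x :: 'a::ring_1^'n))"
  by (simp add: vec_eq_iff matrix_vector_mult_def sum_negf)

lemma matrix_vector_mult_uminus_right: "A *v (- x) = - (A *v (x :: 'a::ring_1^'n))"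
  by (simp add: vec_eq_iff matrix_vector_mult_def sum_negf)

lemma vector_matrix_mult_uminus: "x v* (- A) = - (x v* (A :: 'a::ring_1^'n^'m))"
  by (simp add: vec_eq_iff vector_matrix_mult_def sum_negf)

lemma row_matrix_mult: "(A ** B) $ i = A $ i v* (B :: 'a::comm_semiring_1^'n^'m)"
  by (simp add: vec_eq_iff matrix_matrix_mult_def vector_matrix_mult_def mult.commute)

lemma matrix_eq_vector_matrix_mult:
  fixes A B :: "'a::comm_semiring_1^'n^'m"
  shows "A = B \<longleftrightarrow> (\<forall>x. x v* A = x v* B)"
proof -
  have "axis i 1 v* A = A $ i" for i and A :: "'a^'n^'m"
    by (simp add: vec_eq_iff vector_matrix_mult_def axis_def mult_delta_left)
  then show ?thesis by (metis vec_eq_iff)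
qed

lemma vector_matrix_mult_sum: "(\<Sum>k\<in>S. f k) v* (A :: 'a::comm_semiring_1^'n^'m) = (\<Sum>k\<in>S. f k v* A)"
  by (induction S rule: infinite_finite_induct) (simp_all add: vector_matrix_left_distrib)

lemma vector_matrix_mult_rows: "x v* R = (\<Sum>k\<in>UNIV. x $ k *s R $ k)"
  by (simp add: vec_eq_iff vector_matrix_mult_def sum_component mult.commute)

lemma vector_matrix_mult_scale:
  "x v* (\<chi> a b. z * M $ a $ b) = z *s (x v* (M :: 'a::comm_semiring_1^'n^'m))"
  by (simp add: vec_eq_iff vector_matrix_mult_def sum_distrib_left mult.left_commute)

lemma scalar_mult_right_cancel: "z *s x = w *s x \<Longrightarrow> x \<noteq> (0 :: 'a::idom^'n) \<Longrightarrow> z = w"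
  by (metis mult_cancel_right vec_eq_iff vector_smult_component zero_index)

lemma trace_eq_sum_left_eigenvalues:
  fixes R X :: "'a::field^'n^'n"
  assumes R: "invertible R" and eigen: "\<And>k. R $ k v* X = d k *s R $ k"
  shows "trace X = (\<Sum>k\<in>UNIV. d k)"
proof -
  define D :: "'a^'n^'n" where "D = (\<chi> k l. if k = l then d k else 0)"
  obtain S where RS: "R ** S = mat 1" and SR: "S ** R = mat 1"
    using R invertible_def by blast
  have "(D ** R) $ k = d k *s R $ k" for k
    by (simp add: row_matrix_mult vec_eq_iff vector_matrix_mult_def D_def mult_delta_left)
  then have "(R ** X) $ k = (D ** R) $ k" for k
    by (simp add: row_matrix_mult eigen)
  then have RX: "R ** X = D ** R"
    by (simp add: vec_eq_iff)
  have "trace X = trace (S ** (R ** X))"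
    by (simp add: matrix_mul_assoc SR)
  also have "\<dots> = trace ((D ** R) ** S)"
    unfolding RX by (rule trace_mul_sym)
  also have "\<dots> = trace D"
    by (simp add: RS flip: matrix_mul_assoc)
  finally show ?thesis
    by (simp add: trace_def D_def)
qed

section \<open>Subfields, Cramer's rule and rational linear algebra\<close>

definition is_subfield :: "'a::field set \<Rightarrow> bool" where
  "is_subfield K \<longleftrightarrow> 0 \<in> K \<and> 1 \<in> K \<and>
      (\<forall>x\<in>K. \<forall>y\<in>K. x + y \<in> K \<and> x * y \<in> K) \<and> (\<forall>x\<in>K. - x \<in> K) \<and>
      (\<forall>x\<in>K. x \<noteq> 0 \<longrightarrow> inverse x \<in> K)"

lemma gen_subfield_eq: "gen_subfield S = \<Inter>{K. S \<subseteq> K \<and> is_subfield K}"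
  unfolding gen_subfield_def is_subfield_def by (rule arg_cong[where f = Inter]) blast

lemma is_subfield_gen_subfield: "is_subfield (gen_subfield S)"
  unfolding gen_subfield_eq is_subfield_def by blast

lemma gen_subfield_superset: "S \<subseteq> gen_subfield S"
  unfolding gen_subfield_eq by blast

lemma is_subfield_Rats: "is_subfield (\<rat> :: 'a::field_char_0 set)"
  unfolding is_subfield_def by auto

context
  fixes K :: "'a::field set"
  assumes K: "is_subfield K"
begin

lemma subfield_zero: "0 \<in> K" and subfield_one: "1 \<in> K"
  and subfield_add: "x \<in> K \<Longrightarrow> y \<in> K \<Longrightarrow> x + y \<in> K"
  and subfield_mult: "x \<in> K \<Longrightarrow> y \<in> K \<Longrightarrow> x * y \<in> K"
  and subfield_uminus: "x \<in> K \<Longrightarrow> - x \<in> K"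
  using K by (simp_all add: is_subfield_def)

lemma subfield_inverse: "x \<in> K \<Longrightarrow> inverse x \<in> K"
  using K by (cases "x = 0") (simp_all add: is_subfield_def)

lemma subfield_diff: "x \<in> K \<Longrightarrow> y \<in> K \<Longrightarrow> x - y \<in> K"
  by (metis diff_conv_add_uminus subfield_add subfield_uminus)

lemma subfield_divide: "x \<in> K \<Longrightarrow> y \<in> K \<Longrightarrow> x / y \<in> K"
  by (simp add: divide_inverse subfield_mult subfield_inverse)

lemma subfield_of_int: "of_int n \<in> K"
proof (induction n rule: int_induct[where k = 0])
  case (step1 i)
  then show ?case by (simp add: subfield_add subfield_one)
next
  case (step2 i)
  then show ?case by (simp add: subfield_diff subfield_one)
qed (simp add: subfield_zero)

lemma subfield_sum: "(\<And>x. x \<in> S \<Longrightarrow> f x \<in> K) \<Longrightarrow> sum f S \<in> K"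
  by (induction S rule: infinite_finite_induct) (auto intro: subfield_add subfield_zero)

lemma subfield_prod: "(\<And>x. x \<in> S \<Longrightarrow> f x \<in> K) \<Longrightarrow> prod f S \<in> K"
  by (induction S rule: infinite_finite_induct) (auto intro: subfield_mult subfield_one)

lemma subfield_det: "(\<And>i j. A $ i $ j \<in> K) \<Longrightarrow> det (A :: 'a^'n^'n) \<in> K"
  unfolding det_def by (auto intro!: subfield_sum subfield_mult subfield_prod subfield_of_int)

lemma cramer_in_subfield:
  fixes A :: "'a^'n^'n"
  assumes "det A \<noteq> 0" "\<And>i j. A $ i $ j \<in> K" "\<And>i. b $ i \<in> K"
  shows "\<exists>x. A *v x = b \<and> (\<forall>k. x $ k \<in> K)"
  using cramer[OF assms(1)] assms(2,3)
  by (auto intro!: subfield_divide subfield_det)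

lemma matrix_inverse_in_subfield:
  fixes A B :: "'a^'n^'n"
  assumes A: "\<And>i j. A $ i $ j \<in> K" and AB: "A ** B = mat 1"
  shows "B $ i $ j \<in> K"
proof -
  have BA: "B ** A = mat 1"
    using AB matrix_left_right_inverse by blast
  have "det A \<noteq> 0"
    using AB by (metis invertible_def invertible_det_nz matrix_left_right_inverse)
  moreover have "axis j 1 $ k \<in> K" for k :: 'n
    by (simp add: axis_def subfield_zero subfield_one)
  ultimately obtain x where x: "A *v x = axis j 1" and xK: "\<forall>k. x $ k \<in> K"
    using cramer_in_subfield A by blast
  have "x = B *v axis j 1"
    using x by (metis BA matrix_vector_mul_assoc matrix_vector_mul_lid)
  then have "x $ i = B $ i $ j"
    by (simp add: matrix_vector_mult_def axis_def mult_delta_right)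
  with xK show ?thesis by metis
qed

lemma normal_equations_in_subfield:
  fixes A :: "'a^'n^'n"
  assumes "det A \<noteq> 0" "\<And>i j. (transpose A ** A) $ i $ j \<in> K" "\<And>i. (transpose A *v b) $ i \<in> K"
  shows "\<exists>x. A *v x = b \<and> (\<forall>k. x $ k \<in> K)"
proof -
  have "det (transpose A ** A) \<noteq> 0"
    using assms(1) by (simp add: det_mul)
  then obtain x where x: "(transpose A ** A) *v x = transpose A *v b" and xK: "\<forall>k. x $ k \<in> K"
    using cramer_in_subfield assms(2,3) by blast
  have "transpose A *v (A *v x - b) = 0"
    using x by (simp add: matrix_vector_mult_diff_distrib matrix_vector_mul_assoc)
  moreover have "\<exists>B. B ** transpose A = mat 1"
    using assms(1) by (metis det_transpose invertible_det_nz invertible_left_inverse)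
  ultimately have "A *v x = b"
    using matrix_left_invertible_ker by fastforce
  with xK show ?thesis by blast
qed

end

lemma subfield_Rats_subset:
  assumes "is_subfield (K :: 'a::field_char_0 set)" and "x \<in> \<rat>"
  shows "x \<in> K"
  using assms(2) by (elim Rats_cases') (simp add: subfield_divide subfield_of_int assms(1))

lemma det_of_rat: "det (\<chi> i j. (of_rat (A $ i $ j) :: 'a::field_char_0)) = of_rat (det (A :: rat^'n^'n))"
  unfolding det_def by (simp add: of_rat_sum of_rat_mult of_rat_prod)

text \<open>A real relation among rational vectors makes their rational Gram matrix singular, and a
  rational kernel vector of the Gram matrix is a rational relation.\<close>

lemma real_independent_if_Rats_independent:
  fixes e :: "'k::finite \<Rightarrow> real^'n^'m"
  assumes rat: "\<And>k i j. e k $ i $ j \<in> \<rat>"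
    and indep: "\<forall>c::'k \<Rightarrow> rat. (\<Sum>k\<in>UNIV. of_rat (c k) *\<^sub>R e k) = 0 \<longrightarrow> (\<forall>k. c k = 0)"
    and rel: "(\<Sum>k\<in>UNIV. r k *\<^sub>R e k) = 0"
  shows "r k = 0"
proof (rule ccontr)
  assume "r k \<noteq> 0"
  then have r: "(\<chi> k. r k) \<noteq> 0"
    by (auto simp: vec_eq_iff)
  define Hq :: "rat^'k^'k" where "Hq = (\<chi> k l. inv of_rat (e k \<bullet> e l))"
  have "e k \<bullet> e l \<in> \<rat>" for k l
    using rat unfolding inner_vec_def by (auto intro!: Rats_sum Rats_mult)
  then have Hq: "of_rat (Hq $ k $ l) = e k \<bullet> e l" for k l
    unfolding Hq_def Rats_def by (simp add: f_inv_into_f)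
  define H :: "real^'k^'k" where "H = (\<chi> k l. of_rat (Hq $ k $ l))"
  have "H *v (\<chi> k. r k) = (\<chi> k. e k \<bullet> (\<Sum>l\<in>UNIV. r l *\<^sub>R e l))"
    by (simp add: vec_eq_iff H_def Hq matrix_vector_mult_def inner_sum_right mult.commute)
  then have "H *v (\<chi> k. r k) = 0"
    by (simp add: rel vec_eq_iff)
  then have "\<not> (\<exists>B. B ** H = mat 1)"
    using r matrix_left_invertible_ker by blast
  then have "det H = 0"
    by (metis invertible_det_nz invertible_left_inverse)
  then have "det Hq = 0"
    by (simp add: H_def det_of_rat)
  then have "\<not> (\<exists>B. B ** Hq = mat 1)"
    by (metis invertible_det_nz invertible_left_inverse)
  then obtain c where c: "c \<noteq> 0" and Hc: "Hq *v c = 0"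
    using matrix_left_invertible_ker by blast
  define v where "v = (\<Sum>l\<in>UNIV. of_rat (c $ l) *\<^sub>R e l)"
  have "e k \<bullet> v = of_rat ((Hq *v c) $ k)" for k
    by (simp add: v_def inner_sum_right matrix_vector_mult_def of_rat_sum of_rat_mult Hq mult.commute)
  then have "v \<bullet> v = 0"
    by (subst (1) v_def) (simp add: inner_sum_left Hc)
  then have "\<forall>l. c $ l = 0"
    using indep by (simp add: v_def)
  with c show False
    by (simp add: vec_eq_iff)
qed

lemma bil_matrix_vector_mult: "bil M (A *v u) (B *v v) = bil (transpose A ** M ** B) u v"
proof -
  have "(A *v u) \<bullet> w = u \<bullet> (transpose A *v w)" for w :: "real^4"
    by (metis dot_lmul_matrix vector_transpose_matrix)
  then show ?thesis
    unfolding bil_def by (simp only: matrix_vector_mul_assoc matrix_mul_assoc)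
qed

lemma bil_matrix_mult: "bil (A ** B) u v = bil A u (B *v v)"
  unfolding bil_def by (simp add: matrix_vector_mul_assoc)

lemma bil_transpose: "bil (transpose M) u v = bil M v u"
  unfolding bil_def by (metis dot_lmul_matrix inner_commute transpose_matrix_vector)

lemma bil_axis: "bil M (axis i 1) (axis j 1) = M $ i $ j"
  unfolding bil_def inner_vec_def matrix_vector_mult_def axis_def
  by (simp add: mult_delta_left mult_delta_right)

lemma bil_eqI: "(\<And>u v. bil X u v = bil Y u v) \<Longrightarrow> X = Y"
  by (metis bil_axis vec_eq_iff)

lemma bil_linear:
  "bil M (u + w) v = bil M u v + bil M w v"  "bil M u (v + w) = bil M u v + bil M u w"
  "bil M (u - w) v = bil M u v - bil M w v"  "bil M u (v - w) = bil M u v - bil M u w"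
  "bil M (c *\<^sub>R u) v = c * bil M u v"       "bil M u (c *\<^sub>R v) = c * bil M u v"
  "bil M (- u) v = - bil M u v"              "bil M u (- v) = - bil M u v"
  "bil M (\<Sum>x\<in>S. f x *\<^sub>R b x) v = (\<Sum>x\<in>S. f x * bil M (b x) v)"
  unfolding bil_def
  by (simp_all add: inner_add_left inner_add_right inner_diff_left inner_diff_right inner_sum_left
      matrix_vector_right_distrib matrix_vector_mult_diff_distrib matrix_vector_mult_scaleR
      matrix_vector_mult_uminus_right)

lemma bil_zero [simp]: "bil M 0 v = 0" "bil M u 0 = 0"
  unfolding bil_def by simp_all

lemma bil_invariant_iff:
  "(\<forall>u v. bil A (I *v u) (I *v v) = bil A u v) \<longleftrightarrow> transpose I ** A ** I = A"
  by (metis bil_eqI bil_matrix_vector_mult)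

lemma symmetric_bil_commute: "transpose M = M \<Longrightarrow> bil M u v = bil M v u"
  by (metis bil_transpose)

lemma kaehler_form_eq: "kaehler_form G I = transpose I ** G"
  by (simp add: kaehler_form_def vec_eq_iff matrix_matrix_mult_def transpose_def)

lemma calH2_iff: "A \<in> calH2 I \<longleftrightarrow> rat_mat A \<and> transpose A = - A \<and> transpose I ** A ** I = A"
  by (auto simp: calH2_def H2Q_def H11R_def antisym_mat_def bil_invariant_iff)

lemma invariant_mult_complex_structure:
  fixes I A :: mat4
  assumes "I ** I = - mat 1" and "transpose I ** A ** I = A"
  shows "A ** I = - (transpose I ** A)"
proof -
  have "A ** I = (transpose I ** A) ** (I ** I)"
    by (metis assms(2) matrix_mul_assoc)
  also have "\<dots> = - (transpose I ** A)"
    by (simp only: assms(1) matrix_mul_uminus_right matrix_mul_rid)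
  finally show ?thesis .
qed

lemma transpose_complex_structure:
  "I ** I = - mat 1 \<Longrightarrow> transpose I ** transpose I = - (mat 1 :: mat4)"
  by (metis matrix_transpose_mul transpose_mat transpose_uminus)

lemma kaehler_form_antisymmetric:
  fixes G I :: mat4
  assumes "I ** I = - mat 1" "transpose G = G" "transpose I ** G ** I = G"
  shows "transpose (kaehler_form G I) = - kaehler_form G I"
  using invariant_mult_complex_structure[OF assms(1,3)]
  by (simp add: kaehler_form_eq matrix_transpose_mul assms(2))

section \<open>Hermitian metrics\<close>

locale hermitian_metric =
  fixes g J :: mat4
  assumes metric: "is_metric g"
    and J_square: "J ** J = - mat 1"
    and J_isometry: "transpose J ** g ** J = g"
begin

lemma bil_commute: "bil g u v = bil g v u"
  using metric by (simp add: is_metric_def symmetric_bil_commute)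

lemma bil_pos: "u \<noteq> 0 \<Longrightarrow> bil g u u > 0"
  using metric by (simp add: is_metric_def)

lemma J_J_vec: "J *v (J *v u) = - u"
  by (simp add: matrix_vector_mul_assoc J_square matrix_vector_mult_uminus)

lemma bil_J_J: "bil g (J *v u) (J *v v) = bil g u v"
  by (simp add: bil_matrix_vector_mult J_isometry)

lemma bil_J_right: "bil g u (J *v v) = - bil g (J *v u) v"
  by (metis J_J_vec bil_J_J bil_linear(8))

lemma bil_J_self: "bil g u (J *v u) = 0"
  using bil_J_right[of u u] bil_commute[of u "J *v u"] by simp

lemma orthonormal_expansion:
  fixes b :: "4 \<Rightarrow> real^4"
  assumes orthonormal: "\<And>i j. bil g (b i) (b j) = (if i = j then 1 else 0)"
  shows "x = (\<Sum>k\<in>UNIV. bil g x (b k) *\<^sub>R b k)"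
proof -
  have inj: "inj b"
    by (rule injI) (metis orthonormal zero_neq_one)
  have dual: "bil g (\<Sum>k\<in>UNIV. c k *\<^sub>R b k) (b j) = c j" for c j
    by (simp add: bil_linear orthonormal if_distrib cong: if_cong)
  have "independent (range b)"
  proof (rule real_vector.independent_if_scalars_zero)
    fix f v assume "(\<Sum>v\<in>range b. f v *\<^sub>R v) = 0" and "v \<in> range b"
    then show "f v = 0"
      using dual[of "f \<circ> b"] by (auto simp: sum.reindex[OF inj])
  qed simp
  moreover have "card (range b) = 4"
    using inj by (simp add: card_image)
  ultimately have "UNIV \<subseteq> span (range b)"
    by (intro card_ge_dim_independent) auto
  then obtain c where "x = (\<Sum>v\<in>range b. c v *\<^sub>R v)"
    using span_finite[of "range b"] by auto
  then have "x = (\<Sum>k\<in>UNIV. (c \<circ> b) k *\<^sub>R b k)"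
    by (simp add: sum.reindex[OF inj])
  then show ?thesis
    using dual by simp
qed

definition unitary_frame :: "real^4 \<Rightarrow> real^4 \<Rightarrow> bool" where
  "unitary_frame e1 e2 \<longleftrightarrow>
     bil g e1 e1 = 1 \<and> bil g e2 e2 = 1 \<and> bil g e2 e1 = 0 \<and> bil g e2 (J *v e1) = 0"

lemma unitary_frame_exists: "\<exists>e1 e2. unitary_frame e1 e2"
proof -
  define normalize where "normalize u = (1 / sqrt (bil g u u)) *\<^sub>R u" for u
  have unit: "bil g (normalize u) (normalize u) = 1" if "u \<noteq> 0" for u
    using bil_pos[OF that] by (simp add: normalize_def bil_linear)
  define e1 :: "real^4" where "e1 = normalize (axis 1 1)"
  have e1: "bil g e1 e1 = 1"
    by (simp add: e1_def unit axis_eq_0_iff)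
  have "\<not> UNIV \<subseteq> span {e1, J *v e1}"
  proof
    assume "UNIV \<subseteq> span {e1, J *v e1}"
    then have "dim (UNIV :: (real^4) set) \<le> card {e1, J *v e1}"
      by (rule dim_le_card) simp
    also have "\<dots> \<le> 2"
      by (simp add: card_insert_le_m1)
    finally show False by simp
  qed
  then obtain w where w: "w \<notin> span {e1, J *v e1}" by blast
  define r where "r = w - bil g w e1 *\<^sub>R e1 - bil g w (J *v e1) *\<^sub>R (J *v e1)"
  have "r \<noteq> 0"
  proof
    assume "r = 0"
    then have "w = bil g w e1 *\<^sub>R e1 + bil g w (J *v e1) *\<^sub>R (J *v e1)"
      by (simp add: r_def algebra_simps)
    also have "\<dots> \<in> span {e1, J *v e1}"
      by (intro span_add span_scale span_base) auto
    finally show False using w by simp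
  qed
  moreover have "bil g r e1 = 0"
    using e1 by (simp add: r_def bil_linear bil_J_J bil_commute[of "J *v e1" e1] bil_J_self)
  moreover have "bil g r (J *v e1) = 0"
    using e1 by (simp add: r_def bil_linear bil_J_J bil_J_self)
  ultimately have "unitary_frame e1 (normalize r)"
    using e1 unit by (simp add: unitary_frame_def normalize_def bil_linear)
  then show ?thesis by blast
qed

lemma unitary_frame_expansion:
  assumes "unitary_frame e1 e2"
  shows "x = bil g x e1 *\<^sub>R e1 + bil g x (J *v e1) *\<^sub>R (J *v e1)
           + bil g x e2 *\<^sub>R e2 + bil g x (J *v e2) *\<^sub>R (J *v e2)"
proof -
  have e1: "bil g e1 e1 = 1" and e2: "bil g e2 e2 = 1"
    and e2_e1: "bil g e2 e1 = 0" and e2_Je1: "bil g e2 (J *v e1) = 0"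
    using assms by (simp_all add: unitary_frame_def)
  define b :: "4 \<Rightarrow> real^4" where
    "b k = (if k = 1 then e1 else if k = 2 then J *v e1 else if k = 3 then e2 else J *v e2)" for k
  have Je2_e1: "bil g (J *v e2) e1 = 0"
    using e2_Je1 bil_J_right[of e1 e2] bil_commute by simp
  have upper: "bil g e1 (J *v e1) = 0" "bil g e2 e1 = 0" "bil g e2 (J *v e1) = 0"
    "bil g (J *v e2) e1 = 0" "bil g (J *v e2) (J *v e1) = 0" "bil g e2 (J *v e2) = 0"
    using e2_e1 e2_Je1 Je2_e1 by (simp_all add: bil_J_self bil_J_J)
  have "bil g (b i) (b j) = (if i = j then 1 else 0)" for i j
    using exhaust_4[of i] exhaust_4[of j] e1 e2 upper bil_J_J
    by (auto simp: b_def) (metis bil_commute)+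
  from orthonormal_expansion[OF this, of x] show ?thesis
    by (simp add: sum_4 b_def add.assoc)
qed

lemma zero_if_zero_on_unitary_frame:
  assumes "unitary_frame e1 e2" and KJ: "\<And>v. K *v (J *v v) = J *v (K *v v)"
    and "K *v e1 = 0" "K *v e2 = 0"
  shows "K = 0"
proof -
  have "K *v x = 0" for x
    by (subst unitary_frame_expansion[OF assms(1), of x])
      (simp add: KJ assms(3,4) matrix_vector_right_distrib matrix_vector_mult_scaleR)
  then show ?thesis
    by (metis matrix_eq matrix_vector_mult_0)
qed

lemma self_adjoint_bil:
  assumes "transpose (g ** M) = g ** M"
  shows "bil g (M *v u) v = bil g u (M *v v)"
  using assms bil_commute[of "M *v u"]
  by (simp add: bil_matrix_mult[symmetric] symmetric_bil_commute)

lemma quadratic_relation_on_unitary_frame: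
  assumes frame: "unitary_frame e1 e2" and MJ: "M ** J = J ** M"
    and Me1: "M *v e1 = a *\<^sub>R e1 + c *\<^sub>R e2 + d *\<^sub>R (J *v e2)"
    and Me2: "M *v e2 = c *\<^sub>R e1 - d *\<^sub>R (J *v e1) + b *\<^sub>R e2"
  shows "M ** M = (a + b) *\<^sub>R M - (a * b - c * c - d * d) *\<^sub>R mat 1"
proof -
  \<comment> \<open>In the unitary frame \<open>e1, e2\<close>, with \<open>J\<close> acting as \<open>i\<close>, \<open>M\<close> is the Hermitian matrix with
    diagonal \<open>a, b\<close> and off-diagonal entries \<open>c \<plusminus> i d\<close>; \<open>K\<close> is its characteristic polynomial at \<open>M\<close>.\<close>
  define K where "K = M ** M - (a + b) *\<^sub>R M + (a * b - c * c - d * d) *\<^sub>R mat 1"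
  have MJ_vec: "M *v (J *v u) = J *v (M *v u)" for u
    by (simp add: matrix_vector_mul_assoc MJ)
  have K_vec: "K *v v = M *v (M *v v) - (a + b) *\<^sub>R (M *v v) + (a * b - c * c - d * d) *\<^sub>R v" for v
    by (simp add: K_def matrix_vector_mult_add_rdistrib matrix_vector_mult_diff_rdistrib
        matrix_vector_mul_assoc flip: scaleR_matrix_vector_assoc)
  have MJe: "M *v (J *v e1) = a *\<^sub>R (J *v e1) + c *\<^sub>R (J *v e2) - d *\<^sub>R e2"
    "M *v (J *v e2) = c *\<^sub>R (J *v e1) + d *\<^sub>R e1 + b *\<^sub>R (J *v e2)"
    by (simp_all add: MJ_vec Me1 Me2 J_J_vec matrix_vector_right_distrib
        matrix_vector_mult_diff_distrib matrix_vector_mult_scaleR)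
  have "K = 0"
  proof (rule zero_if_zero_on_unitary_frame[OF frame])
    show "K *v (J *v v) = J *v (K *v v)" for v
      by (simp add: K_vec MJ_vec matrix_vector_right_distrib matrix_vector_mult_diff_distrib
          matrix_vector_mult_scaleR)
    show "K *v e1 = 0" "K *v e2 = 0"
      by (simp_all add: K_vec Me1 Me2 MJe matrix_vector_right_distrib
          matrix_vector_mult_diff_distrib matrix_vector_mult_scaleR algebra_simps)
  qed
  then show ?thesis
    by (simp add: K_def algebra_simps eq_neg_iff_add_eq_0)
qed

lemma hermitian_quadratic_relation:
  assumes MJ: "M ** J = J ** M" and gM: "is_metric (g ** M)"
  shows "\<exists>s p. s > 0 \<and> M ** M = s *\<^sub>R M - p *\<^sub>R mat 1"
proof -
  have self_adjoint: "bil g (M *v u) v = bil g u (M *v v)" for u v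
    using gM self_adjoint_bil by (simp add: is_metric_def)
  have MJ_vec: "M *v (J *v u) = J *v (M *v u)" for u
    by (simp add: matrix_vector_mul_assoc MJ)
  have M_J_self: "bil g (M *v u) (J *v u) = 0" for u
    using self_adjoint[of u "J *v u"] bil_J_right[of u "M *v u"] bil_commute[of "J *v u"]
    by (simp add: MJ_vec)
  obtain e1 e2 where frame: "unitary_frame e1 e2"
    using unitary_frame_exists by blast
  note expansion = unitary_frame_expansion[OF frame]
  define a where "a = bil g (M *v e1) e1"
  define b where "b = bil g (M *v e2) e2"
  define c where "c = bil g (M *v e1) e2"
  define d where "d = bil g (M *v e1) (J *v e2)"
  have Me1: "M *v e1 = a *\<^sub>R e1 + c *\<^sub>R e2 + d *\<^sub>R (J *v e2)"
    using expansion[of "M *v e1"] M_J_self[of e1] by (simp add: a_def c_def d_def)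
  have "bil g (M *v e2) e1 = c" "bil g (M *v e2) (J *v e1) = - d"
    using self_adjoint[of e2] bil_commute[of e2] bil_commute[of "J *v e2"] bil_J_right[of e2 "M *v e1"]
    by (simp_all add: c_def d_def MJ_vec)
  then have Me2: "M *v e2 = c *\<^sub>R e1 - d *\<^sub>R (J *v e1) + b *\<^sub>R e2"
    using expansion[of "M *v e2"] M_J_self[of e2] by (simp add: b_def)
  have "e1 \<noteq> 0" "e2 \<noteq> 0"
    using frame by (auto simp: unitary_frame_def)
  then have "a + b > 0"
    using gM by (simp add: a_def b_def is_metric_def bil_matrix_mult self_adjoint add_pos_pos)
  with quadratic_relation_on_unitary_frame[OF frame MJ Me1 Me2] show ?thesis
    by blast
qed

end

section \<open>The Kaehler form lies in the real span of \<open>\<H>\<^sup>2(M\<^sub>I)\<close>\<close>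

lemma polarization_hermitian_metric:
  fixes I P :: mat4
  assumes I: "is_complex_structure I" and P: "P \<in> H11R I"
    and sym: "\<forall>u v. bil P (I *v u) v = bil P (I *v v) u"
    and pos: "\<forall>u. u \<noteq> 0 \<longrightarrow> bil P (I *v u) u > 0"
  shows "hermitian_metric (transpose I ** P) I"
proof -
  have g: "bil (transpose I ** P) u v = bil P (I *v u) v" for u v
    using bil_matrix_vector_mult[of P I u "mat 1" v] by simp
  have "transpose (transpose I ** P) = transpose I ** P"
    by (rule bil_eqI) (simp add: bil_transpose g sym)
  moreover have "transpose I ** P ** I = P"
    using P by (simp add: H11R_def bil_invariant_iff)
  ultimately show ?thesis
    using I pos by unfold_locales
      (simp_all add: is_metric_def is_complex_structure_def g matrix_mul_assoc[symmetric])
qed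

lemma right_inverse_of_positive:
  fixes A P :: mat4
  assumes "\<forall>u. u \<noteq> 0 \<longrightarrow> bil (A ** P) u u > 0"
  shows "\<exists>Q. P ** Q = mat 1"
proof -
  have "P *v x = 0 \<longrightarrow> x = 0" for x
    using assms by (auto simp: bil_matrix_mult)
  then show ?thesis
    using matrix_left_invertible_ker matrix_left_right_inverse by blast
qed

lemma inverse_antisymmetric:
  fixes P Q :: "'a::field^'n^'n"
  assumes P: "transpose P = - P" and PQ: "P ** Q = mat 1"
  shows "transpose Q = - Q"
proof -
  have "transpose Q ** P = - mat 1"
    using arg_cong[OF PQ, of transpose]
    by (simp add: matrix_transpose_mul P matrix_mul_uminus_right) (metis minus_minus)
  then have "transpose Q = - (mat 1 ** Q)"
    by (metis PQ matrix_mul_assoc matrix_mul_rid matrix_mul_uminus_left)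
  then show ?thesis by simp
qed

lemma inverse_invariant:
  fixes I P Q :: mat4
  assumes I: "I ** I = - mat 1" and P: "transpose I ** P ** I = P" and PQ: "P ** Q = mat 1"
  shows "I ** Q ** transpose I = Q"
proof -
  have "P ** (I ** Q ** transpose I) = - (transpose I ** (P ** Q) ** transpose I)"
    by (simp add: matrix_mul_assoc invariant_mult_complex_structure[OF I P] matrix_mul_uminus_left)
  also have "\<dots> = mat 1"
    by (simp add: PQ transpose_complex_structure[OF I])
  finally have "P ** (I ** Q ** transpose I) = P ** Q"
    by (simp add: PQ)
  then show ?thesis
    by (metis PQ matrix_left_right_inverse matrix_mul_assoc matrix_mul_lid)
qed

lemma kaehler_form_sandwich:
  fixes G I Q :: mat4
  assumes I: "I ** I = - mat 1" and G: "transpose I ** G ** I = G"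
    and Q: "I ** Q ** transpose I = Q"
  shows "kaehler_form G I ** Q ** kaehler_form G I = - (G ** Q ** G)"
proof -
  have "(- (G ** I)) ** Q ** (transpose I ** G) = - (G ** (I ** Q ** transpose I) ** G)"
    by (simp add: matrix_mul_uminus_left matrix_mul_assoc)
  then have "(- (G ** I)) ** Q ** (transpose I ** G) = - (G ** Q ** G)"
    by (simp add: Q)
  moreover have "kaehler_form G I = - (G ** I)" "kaehler_form G I = transpose I ** G"
    by (simp_all add: kaehler_form_eq invariant_mult_complex_structure[OF I G])
  ultimately show ?thesis by metis
qed

lemma sandwich_in_calH2:
  fixes G I Q :: mat4
  assumes I: "I ** I = - mat 1" and G: "transpose G = G" "rat_mat G" "transpose I ** G ** I = G"
    and Q: "transpose Q = - Q" "rat_mat Q" "I ** Q ** transpose I = Q"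
  shows "G ** Q ** G \<in> calH2 I"
proof -
  have "rat_mat (G ** Q ** G)"
    using G(2) Q(2) unfolding rat_mat_def matrix_matrix_mult_def by (auto intro!: Rats_sum Rats_mult)
  moreover have "transpose (G ** Q ** G) = - (G ** Q ** G)"
    by (simp add: matrix_transpose_mul G(1) Q(1) matrix_mul_uminus_left matrix_mul_uminus_right
        matrix_mul_assoc)
  moreover have "transpose I ** (G ** Q ** G) ** I = G ** Q ** G"
  proof -
    have "transpose I ** (G ** Q ** G) ** I = (transpose I ** G) ** Q ** (G ** I)"
      by (simp add: matrix_mul_assoc)
    also have "\<dots> = G ** (I ** Q ** transpose I) ** G"
      using invariant_mult_complex_structure[OF I G(3)]
      by (simp add: matrix_mul_uminus_left matrix_mul_uminus_right matrix_mul_assoc)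
    finally show ?thesis by (simp add: Q(3))
  qed
  ultimately show ?thesis by (simp add: calH2_iff)
qed

lemma kaehler_form_quadratic_relation:
  fixes G I P Q :: mat4
  assumes "hermitian_metric (transpose I ** P) I" and PQ: "P ** Q = mat 1"
    and G: "is_metric G" "transpose I ** G ** I = G" and QI: "I ** Q ** transpose I = Q"
  shows "\<exists>s p. s > 0 \<and> kaehler_form G I ** Q ** kaehler_form G I = - (s *\<^sub>R kaehler_form G I) - p *\<^sub>R P"
proof -
  interpret hermitian_metric "transpose I ** P" I by fact
  define \<omega> where "\<omega> = kaehler_form G I"
  define M where "M = - (Q ** \<omega>)"
  have "(transpose I ** P) ** M = - (transpose I ** (P ** Q) ** \<omega>)"
    by (simp add: M_def matrix_mul_uminus_right matrix_mul_assoc)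
  also have "\<dots> = - (transpose I ** transpose I ** G)"
    by (simp add: PQ \<omega>_def kaehler_form_eq matrix_mul_assoc)
  finally have gM: "(transpose I ** P) ** M = G"
    by (simp add: transpose_complex_structure[OF J_square] matrix_mul_uminus_left)
  have "M ** I = - (Q ** (transpose I ** G ** I))" "I ** M = - ((I ** Q ** transpose I) ** G)"
    by (simp_all add: M_def \<omega>_def kaehler_form_eq matrix_mul_uminus_left matrix_mul_uminus_right
        matrix_mul_assoc)
  then have "M ** I = I ** M"
    by (simp add: G(2) QI)
  then obtain s p where s: "s > 0" and MM: "M ** M = s *\<^sub>R M - p *\<^sub>R mat 1"
    using hermitian_quadratic_relation gM G(1) by blast
  have PM: "\<omega> = - (P ** M)"
    by (simp add: M_def matrix_mul_uminus_right matrix_mul_assoc PQ)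
  have "\<omega> ** Q ** \<omega> = P ** M ** (Q ** P) ** M"
    by (simp add: PM matrix_mul_uminus_left matrix_mul_uminus_right matrix_mul_assoc)
  also have "\<dots> = P ** (M ** M)"
    using PQ matrix_left_right_inverse[of P Q] by (simp add: matrix_mul_assoc)
  also have "\<dots> = - (s *\<^sub>R \<omega>) - p *\<^sub>R P"
    by (simp add: MM matrix_mul_diff_right matrix_scalar_ac scalar_matrix_assoc PM)
  finally show ?thesis
    using s unfolding \<omega>_def by blast
qed

lemma kaehler_form_in_span_calH2:
  fixes G I :: mat4
  assumes G: "is_metric G" "rat_mat G" and I: "is_complex_structure I"
    and pol: "polarizable I" and comp: "compatible G I"
  shows "kaehler_form G I \<in> span (calH2 I)"
proof -
  define \<omega> where "\<omega> = kaehler_form G I"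
  have II: "I ** I = - mat 1"
    using I by (simp add: is_complex_structure_def)
  have GI: "transpose I ** G ** I = G"
    using comp by (simp add: compatible_def bil_invariant_iff)
  obtain P where PZ: "P \<in> H2Z" and PH: "P \<in> H11R I"
    and sym: "\<forall>u v. bil P (I *v u) v = bil P (I *v v) u"
    and pos: "\<forall>u. u \<noteq> 0 \<longrightarrow> bil P (I *v u) u > 0"
    using pol unfolding polarizable_def by blast
  have P: "P \<in> calH2 I"
    using PZ PH by (simp add: calH2_def H2Q_def H2Z_def rat_mat_def int_mat_def Ints_subset_Rats[THEN subsetD])
  then have PI: "transpose I ** P ** I = P" and Pa: "transpose P = - P" and Prat: "rat_mat P"
    by (simp_all add: calH2_iff)
  have herm: "hermitian_metric (transpose I ** P) I"
    by (rule polarization_hermitian_metric[OF I PH sym pos])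
  obtain Q where PQ: "P ** Q = mat 1"
    using right_inverse_of_positive[of "transpose I" P] hermitian_metric.bil_pos[OF herm] by auto
  have Qrat: "rat_mat Q"
    using matrix_inverse_in_subfield[OF is_subfield_Rats _ PQ] Prat by (simp add: rat_mat_def)
  have QI: "I ** Q ** transpose I = Q"
    by (rule inverse_invariant[OF II PI PQ])
  obtain s p where s: "s > 0" and \<omega>Q\<omega>: "\<omega> ** Q ** \<omega> = - (s *\<^sub>R \<omega>) - p *\<^sub>R P"
    using kaehler_form_quadratic_relation[OF herm PQ G(1) GI QI] unfolding \<omega>_def by blast
  have "G ** Q ** G = s *\<^sub>R \<omega> + p *\<^sub>R P"
    using \<omega>Q\<omega> kaehler_form_sandwich[OF II GI QI] by (simp add: \<omega>_def algebra_simps)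
  then have "\<omega> = (1 / s) *\<^sub>R (G ** Q ** G) - (p / s) *\<^sub>R P"
    using s by (simp add: scaleR_add_right)
  moreover have "G ** Q ** G \<in> calH2 I"
    using G II GI Qrat QI inverse_antisymmetric[OF Pa PQ]
    by (intro sandwich_in_calH2) (simp_all add: is_metric_def)
  ultimately show ?thesis
    unfolding \<omega>_def using P by (metis span_base span_diff span_scale)
qed

lemma cmat_mult: "cmat (A ** B) = cmat A ** cmat B"
  by (simp add: cmat_def vec_eq_iff matrix_matrix_mult_def)

lemma cmat_uminus: "cmat (- A) = - cmat A"
  by (simp add: cmat_def vec_eq_iff)

lemma cmat_mat: "cmat (mat c) = mat (complex_of_real c)"
  by (simp add: cmat_def vec_eq_iff mat_def)

lemma cmat_inject: "cmat A = cmat B \<longleftrightarrow> A = B"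
  by (simp add: cmat_def vec_eq_iff)

lemma trace_cmat: "trace (cmat A) = complex_of_real (trace A)"
  by (simp add: trace_def cmat_def)

definition vec_cnj :: "complex^'n \<Rightarrow> complex^'n" where
  "vec_cnj x = (\<chi> i. cnj (x $ i))"

lemma vec_cnj_vector_matrix_mult: "vec_cnj (x v* cmat A) = vec_cnj x v* cmat A"
  by (simp add: vec_cnj_def vec_eq_iff vector_matrix_mult_def cmat_def cnj_sum)

lemma vec_cnj_scale: "vec_cnj (z *s x) = cnj z *s vec_cnj x"
  by (simp add: vec_cnj_def vec_eq_iff)

lemma vec_cnj_add: "vec_cnj (x + y) = vec_cnj x + vec_cnj y"
  by (simp add: vec_cnj_def vec_eq_iff)

lemma vec_cnj_vec_cnj [simp]: "vec_cnj (vec_cnj x) = x"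
  by (simp add: vec_cnj_def vec_eq_iff)

lemma vec_cnj_inject: "vec_cnj x = vec_cnj y \<longleftrightarrow> x = y"
  by (metis vec_cnj_vec_cnj)

lemma vec_cnj_eq_0_iff [simp]: "vec_cnj x = 0 \<longleftrightarrow> x = 0"
  by (simp add: vec_cnj_def vec_eq_iff)

lemma vec_cnj_H10_iff: "vec_cnj x \<in> H10 I \<longleftrightarrow> x \<in> H01 I"
proof -
  have "vec_cnj ((- \<i>) *s x) = \<i> *s vec_cnj x"
    by (simp only: vec_cnj_scale) simp
  then have "vec_cnj x \<in> H10 I \<longleftrightarrow> vec_cnj (x v* cmat I) = vec_cnj ((- \<i>) *s x)"
    by (simp add: H10_def vec_cnj_vector_matrix_mult)
  also have "\<dots> \<longleftrightarrow> x \<in> H01 I"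
    by (simp add: H01_def vec_cnj_inject)
  finally show ?thesis .
qed

lemma covector_decomposition:
  fixes I :: mat4
  assumes "I ** I = - mat 1"
  shows "\<exists>y z. y \<in> H10 I \<and> z \<in> H01 I \<and> x = y + z"
proof -
  define x' where "x' = x v* cmat I"
  have "x' v* cmat I = x v* cmat (I ** I)"
    by (simp add: x'_def vector_matrix_mul_assoc cmat_mult)
  then have x'I: "x' v* cmat I = - x"
    by (simp add: assms cmat_uminus cmat_mat vector_matrix_mult_uminus)
  define y where "y = (1/2) *s (x - \<i> *s x')"
  define z where "z = (1/2) *s (x + \<i> *s x')"
  have "y v* cmat I = (1/2) *s (x' + \<i> *s x)"
    by (simp add: y_def scalar_vector_matrix_assoc vector_matrix_mult_diff_distrib x'I flip: x'_def)
  then have "y \<in> H10 I"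
    by (simp add: H10_def y_def vec_eq_iff algebra_simps)
  moreover have "z v* cmat I = (1/2) *s (x' - \<i> *s x)"
    by (simp add: z_def scalar_vector_matrix_assoc vector_matrix_left_distrib x'I flip: x'_def)
  then have "z \<in> H01 I"
    by (simp add: H01_def z_def vec_eq_iff algebra_simps)
  moreover have "x = y + z"
    by (simp add: y_def z_def vec_eq_iff algebra_simps)
  ultimately show ?thesis by blast
qed

section \<open>Eigencovectors of a CM algebra\<close>

locale CM_frame =
  fixes I :: mat4 and F :: "mat4 set" and \<phi>1 \<phi>2 :: "mat4 \<Rightarrow> complex"
    and \<alpha>1 \<alpha>2 :: "complex^4" and e :: "4 \<Rightarrow> mat4"
  assumes I_square: "I ** I = - mat 1"
    and F_rat: "\<And>a. a \<in> F \<Longrightarrow> rat_mat a"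
    and F_mult: "\<And>a b. a \<in> F \<Longrightarrow> b \<in> F \<Longrightarrow> a ** b \<in> F"
    and e_in_F: "\<And>j. e j \<in> F"
    and e_independent: "\<forall>c::4 \<Rightarrow> rat. (\<Sum>j\<in>UNIV. of_rat (c j) *\<^sub>R e j) = 0 \<longrightarrow> (\<forall>j. c j = 0)"
    and \<alpha>_H10: "\<alpha>1 \<in> H10 I" "\<alpha>2 \<in> H10 I"
    and \<alpha>_independent: "\<And>z w. z *s \<alpha>1 + w *s \<alpha>2 = 0 \<Longrightarrow> z = 0 \<and> w = 0"
    and \<alpha>_span: "\<And>\<alpha>. \<alpha> \<in> H10 I \<Longrightarrow> \<exists>z w. \<alpha> = z *s \<alpha>1 + w *s \<alpha>2"
    and \<alpha>_eigen: "\<And>a. a \<in> F \<Longrightarrow> \<alpha>1 v* cmat a = \<phi>1 a *s \<alpha>1 \<and> \<alpha>2 v* cmat a = \<phi>2 a *s \<alpha>2"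
begin

definition covector :: "4 \<Rightarrow> complex^4" where
  "covector k = (if k = 1 then \<alpha>1 else if k = 2 then \<alpha>2 else if k = 3 then vec_cnj \<alpha>1 else vec_cnj \<alpha>2)"

definition character :: "4 \<Rightarrow> mat4 \<Rightarrow> complex" where
  "character k a =
     (if k = 1 then \<phi>1 a else if k = 2 then \<phi>2 a else if k = 3 then cnj (\<phi>1 a) else cnj (\<phi>2 a))"

definition hodge_sign :: "4 \<Rightarrow> complex" where
  "hodge_sign k = (if k = 1 \<or> k = 2 then 1 else -1)"

lemma covector_I: "covector k v* cmat I = (\<i> * hodge_sign k) *s covector k"
proof -
  have holomorphic: "\<alpha> v* cmat I = \<i> *s \<alpha>" if "\<alpha> \<in> H10 I" for \<alpha>
    using that by (simp add: H10_def)
  have antiholomorphic: "vec_cnj \<alpha> v* cmat I = (- \<i>) *s vec_cnj \<alpha>" if "\<alpha> \<in> H10 I" for \<alpha>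
    using that vec_cnj_H10_iff[of "vec_cnj \<alpha>" I] by (simp add: H01_def)
  show ?thesis
    using exhaust_4[of k] holomorphic[OF \<alpha>_H10(1)] holomorphic[OF \<alpha>_H10(2)]
      antiholomorphic[OF \<alpha>_H10(1)] antiholomorphic[OF \<alpha>_H10(2)]
    by (elim disjE) (simp_all add: covector_def hodge_sign_def)
qed

lemma covector_F: "a \<in> F \<Longrightarrow> covector k v* cmat a = character k a *s covector k"
  using exhaust_4[of k] \<alpha>_eigen[of a]
  by (auto simp: covector_def character_def vec_cnj_scale simp flip: vec_cnj_vector_matrix_mult)

lemma covector_nonzero: "covector k \<noteq> 0"
proof -
  have "\<alpha>1 \<noteq> 0" "\<alpha>2 \<noteq> 0"
    using \<alpha>_independent[of 1 0] \<alpha>_independent[of 0 1] by auto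
  then show ?thesis
    using exhaust_4[of k] by (auto simp: covector_def)
qed

lemma covectors_span: "\<exists>z. x = (\<Sum>k\<in>UNIV. z k *s covector k)"
proof -
  obtain y w where y: "y \<in> H10 I" and w: "w \<in> H01 I" and x: "x = y + w"
    using covector_decomposition[OF I_square] by blast
  obtain z1 z2 where z12: "y = z1 *s \<alpha>1 + z2 *s \<alpha>2"
    using \<alpha>_span[OF y] by blast
  obtain z3 z4 where "vec_cnj w = z3 *s \<alpha>1 + z4 *s \<alpha>2"
    using \<alpha>_span w vec_cnj_H10_iff by blast
  then have z34: "w = cnj z3 *s vec_cnj \<alpha>1 + cnj z4 *s vec_cnj \<alpha>2"
    by (metis vec_cnj_add vec_cnj_scale vec_cnj_vec_cnj)
  define z where "z k = (if k = 1 then z1 else if k = 2 then z2 else if k = 3 then cnj z3 else cnj z4)"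
    for k :: 4
  have "x = (\<Sum>k\<in>UNIV. z k *s covector k)"
    by (simp add: x z12 z34 sum_4 z_def covector_def add.assoc)
  then show ?thesis by blast
qed

lemma matrix_eq_on_covectors:
  assumes "\<And>k. covector k v* A = covector k v* B"
  shows "A = B"
  unfolding matrix_eq_vector_matrix_mult
proof
  fix x
  obtain z where "x = (\<Sum>k\<in>UNIV. z k *s covector k)"
    using covectors_span by blast
  then show "x v* A = x v* B"
    by (simp add: vector_matrix_mult_sum scalar_vector_matrix_assoc assms)
qed

lemma covector_matrix_invertible: "invertible (\<chi> k. covector k)"
proof -
  have "\<forall>i. \<exists>z. axis i 1 = (\<Sum>k\<in>UNIV. z k *s covector k)"
    using covectors_span by blast
  then obtain z where z: "\<And>i. axis i 1 = (\<Sum>k\<in>UNIV. z i k *s covector k)"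
    using choice[of "\<lambda>i z. axis i 1 = (\<Sum>k\<in>UNIV. z k *s covector k)"] by blast
  have "(\<chi> i k. z i k) ** (\<chi> k. covector k) = mat 1"
    by (simp add: vec_eq_iff row_matrix_mult vector_matrix_mult_rows flip: z)
      (simp add: axis_def mat_def)
  then show ?thesis
    using invertible_left_inverse by blast
qed

lemma F_commute_I:
  assumes "a \<in> F"
  shows "a ** I = I ** a"
proof -
  have "covector k v* cmat (a ** I) = covector k v* cmat (I ** a)" for k
    by (simp add: cmat_mult vector_matrix_mul_assoc[symmetric] covector_F[OF assms] covector_I
        scalar_vector_matrix_assoc vector_smult_assoc mult.commute)
  then show ?thesis
    using matrix_eq_on_covectors cmat_inject by blast
qed

lemma character_mult:
  assumes "a \<in> F" "b \<in> F"
  shows "character k (a ** b) = character k a * character k b"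
proof (rule scalar_mult_right_cancel[OF _ covector_nonzero])
  have "character k (a ** b) *s covector k = covector k v* (cmat a ** cmat b)"
    by (simp add: covector_F F_mult assms flip: cmat_mult)
  also have "\<dots> = (character k a * character k b) *s covector k"
    by (simp add: vector_matrix_mul_assoc[symmetric] covector_F assms scalar_vector_matrix_assoc
        vector_smult_assoc mult.commute)
  finally show "character k (a ** b) *s covector k = (character k a * character k b) *s covector k" .
qed

lemma trace_eq_sum_characters: "a \<in> F \<Longrightarrow> complex_of_real (trace a) = (\<Sum>k\<in>UNIV. character k a)"
  using trace_eq_sum_left_eigenvalues[OF covector_matrix_invertible, of "cmat a"]
  by (simp add: covector_F trace_cmat)

definition basis_combination :: "complex^4 \<Rightarrow> complex^4^4" where
  "basis_combination c = (\<chi> a b. \<Sum>j\<in>UNIV. c $ j * complex_of_real (e j $ a $ b))"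

definition character_matrix :: "complex^4^4" where
  "character_matrix = (\<chi> k j. character k (e j))"

lemma covector_basis_combination:
  "covector k v* basis_combination c = (character_matrix *v c) $ k *s covector k"
proof -
  have "covector k v* basis_combination c = (\<Sum>j\<in>UNIV. c $ j *s (covector k v* cmat (e j)))"
    by (simp add: vec_eq_iff vector_matrix_mult_def basis_combination_def cmat_def sum_component
        sum_distrib_left mult_ac) (intro allI sum.swap)
  also have "\<dots> = (\<Sum>j\<in>UNIV. (c $ j * character k (e j)) *s covector k)"
    by (simp add: covector_F e_in_F vector_smult_assoc)
  finally show ?thesis
    by (simp add: vec_eq_iff sum_component sum_distrib_left character_matrix_def
        matrix_vector_mult_def mult_ac)
qed

lemma det_character_matrix_nonzero: "det character_matrix \<noteq> 0"
proof -
  have "c = 0" if c: "character_matrix *v c = 0" for c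
  proof -
    have "basis_combination c = 0"
      by (rule matrix_eq_on_covectors) (simp add: covector_basis_combination c)
    then have "(\<Sum>j\<in>UNIV. c $ j * complex_of_real (e j $ a $ b)) = 0" for a b
      unfolding basis_combination_def by (simp add: vec_eq_iff)
    then have "Re (\<Sum>j\<in>UNIV. c $ j * complex_of_real (e j $ a $ b)) = 0"
      "Im (\<Sum>j\<in>UNIV. c $ j * complex_of_real (e j $ a $ b)) = 0" for a b
      by simp_all
    then have Re: "(\<Sum>j\<in>UNIV. Re (c $ j) *\<^sub>R e j) = 0" and Im: "(\<Sum>j\<in>UNIV. Im (c $ j) *\<^sub>R e j) = 0"
      by (simp_all add: vec_eq_iff sum_component Re_sum Im_sum)
    have "e j $ a $ b \<in> \<rat>" for j a b
      using F_rat e_in_F by (simp add: rat_mat_def)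
    note real_independent = real_independent_if_Rats_independent[of e, OF this e_independent]
    have "Re (c $ j) = 0 \<and> Im (c $ j) = 0" for j
      using real_independent[OF Re] real_independent[OF Im] by blast
    then show ?thesis
      by (simp add: vec_eq_iff complex_eq_iff)
  qed
  then show ?thesis
    using matrix_left_invertible_ker invertible_det_nz invertible_left_inverse by blast
qed

lemma subfield_reflex_field: "is_subfield (reflex_field F \<phi>1 \<phi>2)"
  by (simp add: reflex_field_def is_subfield_gen_subfield)

lemma trace_in_reflex_field:
  assumes "a \<in> F"
  shows "complex_of_real (trace a) \<in> reflex_field F \<phi>1 \<phi>2"
proof (rule subfield_Rats_subset[OF subfield_reflex_field])
  show "complex_of_real (trace a) \<in> \<rat>"
    using F_rat[OF assms] unfolding rat_mat_def trace_def by (simp add: Rats_sum)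
qed

lemma type_trace_in_reflex_field: "a \<in> F \<Longrightarrow> \<phi>1 a + \<phi>2 a \<in> reflex_field F \<phi>1 \<phi>2"
  unfolding reflex_field_def by (rule subsetD[OF gen_subfield_superset]) blast

lemma character_gram_matrix:
  "(transpose character_matrix ** character_matrix) $ j $ l = complex_of_real (trace (e j ** e l))"
proof -
  have "(transpose character_matrix ** character_matrix) $ j $ l
      = (\<Sum>k\<in>UNIV. character k (e j) * character k (e l))"
    by (simp add: matrix_matrix_mult_def transpose_def character_matrix_def)
  then show ?thesis
    by (simp add: character_mult e_in_F F_mult trace_eq_sum_characters)
qed

lemma character_matrix_hodge_sign:
  "(transpose character_matrix *v (\<chi> k. hodge_sign k)) $ j
     = 2 * (\<phi>1 (e j) + \<phi>2 (e j)) - complex_of_real (trace (e j))"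
proof -
  have "(transpose character_matrix *v (\<chi> k. hodge_sign k)) $ j
      = (\<Sum>k\<in>UNIV. character k (e j) * hodge_sign k)"
    by (simp add: matrix_vector_mult_def transpose_def character_matrix_def mult.commute)
  then show ?thesis
    using trace_eq_sum_characters[OF e_in_F, of j] by (simp add: sum_4 character_def hodge_sign_def)
qed

lemma complex_structure_in_reflex_span:
  "\<exists>c. (\<forall>j. c $ j \<in> reflex_field F \<phi>1 \<phi>2) \<and>
       (\<forall>a b. complex_of_real (I $ a $ b) = \<i> * (\<Sum>j\<in>UNIV. c $ j * complex_of_real (e j $ a $ b)))"
proof -
  let ?E = "reflex_field F \<phi>1 \<phi>2"
  have "(transpose character_matrix ** character_matrix) $ j $ l \<in> ?E" for j l
    by (simp add: character_gram_matrix trace_in_reflex_field e_in_F F_mult)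
  moreover have "(transpose character_matrix *v (\<chi> k. hodge_sign k)) $ j \<in> ?E" for j
    unfolding character_matrix_hodge_sign mult_2
    by (intro subfield_diff[OF subfield_reflex_field] subfield_add[OF subfield_reflex_field]
        type_trace_in_reflex_field trace_in_reflex_field e_in_F)
  ultimately obtain c where Ac: "character_matrix *v c = (\<chi> k. hodge_sign k)" and cE: "\<forall>j. c $ j \<in> ?E"
    using normal_equations_in_subfield[OF subfield_reflex_field det_character_matrix_nonzero] by blast
  have "cmat I = (\<chi> a b. \<i> * basis_combination c $ a $ b)"
  proof (rule matrix_eq_on_covectors)
    fix k
    have "covector k v* (\<chi> a b. \<i> * basis_combination c $ a $ b) = \<i> *s (covector k v* basis_combination c)"
      by (rule vector_matrix_mult_scale)
    then show "covector k v* cmat I = covector k v* (\<chi> a b. \<i> * basis_combination c $ a $ b)"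
      by (simp add: covector_I covector_basis_combination Ac vector_smult_assoc)
  qed
  then have "cmat I $ a $ b = \<i> * basis_combination c $ a $ b" for a b
    by simp
  then show ?thesis
    using cE by (auto simp: cmat_def basis_combination_def)
qed

end

lemma CM_frame_exists:
  assumes I: "is_complex_structure I" and F: "CM_algebra I F" and CM: "CM_type I F \<phi>1 \<phi>2"
  shows "\<exists>\<alpha>1 \<alpha>2 e. CM_frame I F \<phi>1 \<phi>2 \<alpha>1 \<alpha>2 e"
proof -
  obtain \<alpha>1 \<alpha>2 where \<alpha>: "\<alpha>1 \<in> H10 I" "\<alpha>2 \<in> H10 I"
    "\<forall>z w. z *s \<alpha>1 + w *s \<alpha>2 = 0 \<longrightarrow> z = 0 \<and> w = 0"
    "\<forall>\<alpha>\<in>H10 I. \<exists>z w. \<alpha> = z *s \<alpha>1 + w *s \<alpha>2"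
    "\<forall>a\<in>F. \<alpha>1 v* cmat a = \<phi>1 a *s \<alpha>1 \<and> \<alpha>2 v* cmat a = \<phi>2 a *s \<alpha>2"
    using CM unfolding CM_type_def by (elim exE conjE) (intro that)
  obtain e where e: "\<forall>j. e j \<in> F"
    "\<forall>c::4 \<Rightarrow> rat. (\<Sum>j\<in>UNIV. of_rat (c j) *\<^sub>R e j) = 0 \<longrightarrow> (\<forall>j. c j = 0)"
    using F unfolding CM_algebra_def by (elim exE conjE) (intro that)
  have "\<forall>a\<in>F. rat_mat a" "\<forall>a\<in>F. \<forall>b\<in>F. a ** b \<in> F"
    using F unfolding CM_algebra_def hodge_endo_def by auto
  with I \<alpha> e have "CM_frame I F \<phi>1 \<phi>2 \<alpha>1 \<alpha>2 e"
    unfolding is_complex_structure_def by unfold_locales simp_all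
  then show ?thesis by blast
qed

section \<open>The Kaehler form over the reflex field\<close>

lemma antisymmetrization_in_calH2:
  fixes G I a :: mat4
  assumes G: "transpose G = G" "rat_mat G" "transpose I ** G ** I = G"
    and a: "rat_mat a" "a ** I = I ** a"
  shows "(1/2) *\<^sub>R (transpose a ** G - G ** a) \<in> calH2 I"
proof -
  have "rat_mat (transpose a ** G)" "rat_mat (G ** a)"
    using G(2) a(1) unfolding rat_mat_def matrix_matrix_mult_def transpose_def
    by (auto intro!: Rats_sum Rats_mult)
  then have "rat_mat ((1/2) *\<^sub>R (transpose a ** G - G ** a))"
    by (simp add: rat_mat_def)
  moreover have "transpose ((1/2) *\<^sub>R (transpose a ** G - G ** a)) = - ((1/2) *\<^sub>R (transpose a ** G - G ** a))"
    by (simp add: transpose_scalar transpose_diff matrix_transpose_mul G(1) algebra_simps)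
  moreover have "transpose I ** (transpose a ** G) ** I = transpose a ** G"
  proof -
    have aI: "transpose I ** transpose a = transpose a ** transpose I"
      using arg_cong[OF a(2), of transpose] by (simp add: matrix_transpose_mul)
    have "transpose I ** (transpose a ** G) ** I = (transpose I ** transpose a) ** G ** I"
      by (simp add: matrix_mul_assoc)
    also have "\<dots> = transpose a ** (transpose I ** G ** I)"
      by (simp add: aI matrix_mul_assoc)
    finally show ?thesis by (simp add: G(3))
  qed
  moreover have "transpose I ** (G ** a) ** I = G ** a"
  proof -
    have "transpose I ** (G ** a) ** I = transpose I ** G ** (a ** I)"
      by (simp add: matrix_mul_assoc)
    also have "\<dots> = (transpose I ** G ** I) ** a"
      by (simp add: a(2) matrix_mul_assoc)
    finally show ?thesis by (simp add: G(3))
  qed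
  ultimately show ?thesis
    by (simp add: calH2_iff matrix_mul_diff_left matrix_mul_diff_right matrix_scalar_ac
        scaleR_diff_right flip: scalar_matrix_assoc)
qed

lemma i_kaehler_form_expansion:
  fixes G I :: mat4 and e :: "'k::finite \<Rightarrow> mat4"
  assumes G: "transpose G = G" and \<omega>: "transpose (kaehler_form G I) = - kaehler_form G I"
    and I: "\<And>a b. complex_of_real (I $ a $ b) = \<i> * (\<Sum>j\<in>UNIV. c j * complex_of_real (e j $ a $ b))"
  shows "\<i> * cmat (kaehler_form G I) $ a $ b =
    (\<Sum>j\<in>UNIV. - c j * complex_of_real (((1/2) *\<^sub>R (transpose (e j) ** G - G ** e j)) $ a $ b))"
proof -
  define W where "W j = transpose (e j) ** G" for j
  have W: "\<i> * cmat (kaehler_form G I) $ a $ b = - (\<Sum>j\<in>UNIV. c j * complex_of_real (W j $ a $ b))"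
    for a b
    by (simp add: cmat_def kaehler_form_def W_def matrix_matrix_mult_def transpose_def I
        sum_distrib_left sum_distrib_right mult_ac sum_negf flip: sum_negf) (rule sum.swap)
  have "cmat (kaehler_form G I) $ b $ a = - cmat (kaehler_form G I) $ a $ b"
    using arg_cong[OF \<omega>, of "\<lambda>M. M $ a $ b"] by (simp add: cmat_def transpose_def)
  then have "\<i> * cmat (kaehler_form G I) $ a $ b
      = (\<i> * cmat (kaehler_form G I) $ a $ b - \<i> * cmat (kaehler_form G I) $ b $ a) / 2"
    by (simp add: field_simps)
  also have "\<dots> = (\<Sum>j\<in>UNIV. - c j * ((complex_of_real (W j $ a $ b) - complex_of_real (W j $ b $ a)) / 2))"
    unfolding W by (simp add: sum_divide_distrib algebra_simps flip: sum_subtractf)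
  also have "\<dots> = (\<Sum>j\<in>UNIV. - c j * complex_of_real (((1/2) *\<^sub>R (W j - G ** e j)) $ a $ b))"
  proof -
    have "G $ i $ k = G $ k $ i" for i k
      using arg_cong[OF G, of "\<lambda>M. M $ i $ k"] by (simp add: transpose_def)
    then have "W j $ b $ a = (G ** e j) $ a $ b" for j
      by (simp add: W_def matrix_matrix_mult_def transpose_def mult.commute)
    then have "complex_of_real (((1/2) *\<^sub>R (W j - G ** e j)) $ a $ b)
        = (complex_of_real (W j $ a $ b) - complex_of_real (W j $ b $ a)) / 2" for j
      by simp
    then show ?thesis by simp
  qed
  finally show ?thesis
    by (simp add: W_def)
qed

lemma in_tensor_sum:
  fixes c :: "'k::finite \<Rightarrow> complex" and A :: "'k \<Rightarrow> mat4"
  assumes "\<And>k. c k \<in> E" "\<And>k. A k \<in> H"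
  shows "in_tensor H E (\<chi> i j. \<Sum>k\<in>UNIV. c k * complex_of_real (A k $ i $ j))"
proof -
  have "\<exists>h. bij_betw h {0..<CARD('k)} (UNIV :: 'k set)"
    by (rule ex_bij_betw_nat_finite) simp
  then obtain h :: "nat \<Rightarrow> 'k" where h: "bij_betw h {..<CARD('k)} UNIV"
    by (auto simp: atLeast0LessThan)
  have "(\<Sum>k\<in>UNIV. c k * complex_of_real (A k $ i $ j))
      = (\<Sum>n<CARD('k). c (h n) * complex_of_real (A (h n) $ i $ j))" for i j
    by (rule sum.reindex_bij_betw[OF h, symmetric])
  then show ?thesis
    unfolding in_tensor_def using assms by (intro exI[of _ "CARD('k)"] exI[of _ "c \<circ> h"] exI[of _ "A \<circ> h"]) auto
qed

lemma i_kaehler_form_in_tensor: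
  fixes G I :: mat4
  assumes G: "is_metric G" "rat_mat G" and I: "is_complex_structure I" and comp: "compatible G I"
    and CM: "CM_algebra I F" "CM_type I F \<phi>1 \<phi>2"
  shows "in_tensor (calH2 I) (reflex_field F \<phi>1 \<phi>2) (\<chi> i j. \<i> * cmat (kaehler_form G I) $ i $ j)"
proof -
  obtain \<alpha>1 \<alpha>2 e where "CM_frame I F \<phi>1 \<phi>2 \<alpha>1 \<alpha>2 e"
    using CM_frame_exists[OF I CM] by blast
  then interpret CM_frame I F \<phi>1 \<phi>2 \<alpha>1 \<alpha>2 e .
  obtain c where cE: "\<forall>j. c $ j \<in> reflex_field F \<phi>1 \<phi>2"
    and Ic: "\<forall>a b. complex_of_real (I $ a $ b) = \<i> * (\<Sum>j\<in>UNIV. c $ j * complex_of_real (e j $ a $ b))"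
    using complex_structure_in_reflex_span by blast
  have Gs: "transpose G = G" and GI: "transpose I ** G ** I = G"
    using G(1) comp by (simp_all add: is_metric_def compatible_def bil_invariant_iff)
  define B where "B l = (1/2) *\<^sub>R (transpose (e l) ** G - G ** e l)" for l
  have expansion: "(\<chi> i j. \<i> * cmat (kaehler_form G I) $ i $ j) =
    (\<chi> i j. \<Sum>l\<in>UNIV. - c $ l * complex_of_real (B l $ i $ j))"
    using i_kaehler_form_expansion[OF Gs kaehler_form_antisymmetric[OF I_square Gs GI], of "\<lambda>j. c $ j" e] Ic
    by (simp add: B_def)
  have "B l \<in> calH2 I" for l
    unfolding B_def using Gs G(2) GI F_rat[OF e_in_F] F_commute_I[OF e_in_F]
    by (rule antisymmetrization_in_calH2)
  then show ?thesis
    unfolding expansion using cE by (intro in_tensor_sum subfield_uminus[OF subfield_reflex_field]) auto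
qed

theorem theorem4p5:
  fixes G B I :: mat4
  assumes "is_metric G" and "rat_mat G"
    and "antisym_mat B" and "rat_mat B"
    and "is_complex_structure I" and "polarizable I" and "compatible G I"
  shows "kaehler_form G I \<in> span (calH2 I) \<and>
         (\<forall>F \<phi>1 \<phi>2. CM_algebra I F \<and> CM_type I F \<phi>1 \<phi>2 \<longrightarrow>
           in_tensor (calH2 I) (reflex_field F \<phi>1 \<phi>2) (\<chi> i j. \<i> * cmat (kaehler_form G I) $ i $ j))"
  using kaehler_form_in_span_calH2[OF assms(1,2,5,6,7)] i_kaehler_form_in_tensor[OF assms(1,2,5,7)]
  by blast

end
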